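(* The function $S$ is monotonically increasing on $[1,n]$: for $1\leq t'<t\leq n$ we have $S(t')\leq S(t)$. Moreover, if $S(t')>0$ for some $t'\in[1,n]$, then $S(t')<S(t)$ for all $t\in(t',n]$, i.e. $S$ is strictly increasing on $[t',n]$.
   Context: Let $G$ be a simple graph with vertex set $V=\{1,\dots,n\}$, edge set $E$ and adjacency matrix $A$. Let $e$ be the all-ones vector, $\langle M,N\rangle=\operatorname{trace}(M^TN)$, and $X\geq 0$ mean entrywise nonnegativity. For real $t$ with $1\leq t\leq n$, $Q(t)$ is the semidefinite program $$\min \tfrac12\langle A,X\rangle\ \text{ s.t. } X\succeq 0,\ X\geq 0,\ \operatorname{trace}(X)=t,\ Xe=t\operatorname{diag}(X)$$ over symmetric $n\times n$ matrices $X$, and $S(t)$ denotes its optimal value. *)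

theory Defs
  imports "HOL-Analysis.Analysis"
begin

definition simple_graph :: "('n \<Rightarrow> 'n \<Rightarrow> bool) \<Rightarrow> bool" where
  "simple_graph E \<longleftrightarrow> (\<forall>i j. E i j \<longleftrightarrow> E j i) \<and> (\<forall>i. \<not> E i i)"

definition adj_matrix :: "('n::finite \<Rightarrow> 'n \<Rightarrow> bool) \<Rightarrow> real^'n^'n" where
  "adj_matrix E = (\<chi> i j. if E i j then 1 else 0)"

definition frob :: "real^'n::finite^'n \<Rightarrow> real^'n^'n \<Rightarrow> real" where
  "frob M N = trace (transpose M ** N)"

definition psd :: "real^'n::finite^'n \<Rightarrow> bool" where
  "psd X \<longleftrightarrow> transpose X = X \<and> (\<forall>x. 0 \<le> x \<bullet> (X *v x))"

definition diag_vec :: "real^'n::finite^'n \<Rightarrow> real^'n" where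
  "diag_vec X = (\<chi> i. X $ i $ i)"

definition ones_vec :: "real^'n::finite" where
  "ones_vec = (\<chi> i. 1)"

definition Q_feasible :: "real \<Rightarrow> real^'n::finite^'n \<Rightarrow> bool" where
  "Q_feasible t X \<longleftrightarrow> transpose X = X \<and> psd X \<and> (\<forall>i j. 0 \<le> X $ i $ j)
     \<and> trace X = t \<and> X *v ones_vec = t *\<^sub>R diag_vec X"

definition S_val :: "('n::finite \<Rightarrow> 'n \<Rightarrow> bool) \<Rightarrow> real \<Rightarrow> real" where
  "S_val E t = Inf {frob (adj_matrix E) X / 2 | X. Q_feasible t X}"

end

theory Submission
  imports Defs
begin

text \<open>For a feasible X of Q(t) and 1 \<le> t' < t, the matrix
  Y = \<lambda> X + \<mu> Diag(X) with \<lambda> = t'(t'-1)/(t(t-1)) and \<mu> = t'(t-t')/(t(t-1))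
  is feasible for Q(t'). Since the graph has no loops, the diagonal part does not meet A, so
  the objective of Y is \<lambda> times that of X; hence S(t') \<le> \<lambda> S(t) with 0 \<le> \<lambda> < 1,
  and S \<ge> 0 gives both monotonicity and strictness. Feasibility of every Q(t) follows by
  shrinking the all-ones matrix, which is feasible for Q(n).\<close>

lemma frob_eq_sum: "frob M N = (\<Sum>i\<in>UNIV. \<Sum>j\<in>UNIV. M$i$j * N$i$j)"
  unfolding frob_def trace_def matrix_matrix_mult_def transpose_def
  by simp (rule sum.swap)

lemma frob_adj_matrix_nonneg:
  assumes "\<forall>i j. 0 \<le> X $ i $ j"
  shows "0 \<le> frob (adj_matrix E) X"
  unfolding frob_eq_sum adj_matrix_def using assms
  by (auto intro!: sum_nonneg)

definition scaled_plus_diag :: "real \<Rightarrow> real \<Rightarrow> real^'n::finite^'n \<Rightarrow> real^'n^'n" where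
  "scaled_plus_diag l m X = (\<chi> i j. l * X$i$j + (if i = j then m * X$i$i else 0))"

lemma scaled_plus_diag_nth:
  "scaled_plus_diag l m X $ i $ j = l * X$i$j + (if i = j then m * X$i$i else 0)"
  by (simp add: scaled_plus_diag_def)

lemma quadratic_form_scaled_plus_diag:
  "x \<bullet> (scaled_plus_diag l m X *v x) = l * (x \<bullet> (X *v x)) + (\<Sum>i\<in>UNIV. m * X$i$i * (x$i)\<^sup>2)"
proof -
  have row: "(\<Sum>j\<in>UNIV. scaled_plus_diag l m X $ i $ j * x$j)
      = l * (\<Sum>j\<in>UNIV. X$i$j * x$j) + m * X$i$i * x$i" for i
  proof -
    have "(\<Sum>j\<in>UNIV. scaled_plus_diag l m X $ i $ j * x$j)
        = (\<Sum>j\<in>UNIV. l * (X$i$j * x$j) + (if j = i then m * X$i$i * x$i else 0))"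
      by (intro sum.cong) (auto simp: scaled_plus_diag_nth algebra_simps)
    then show ?thesis by (simp add: sum.distrib sum_distrib_left)
  qed
  have "x \<bullet> (scaled_plus_diag l m X *v x)
      = (\<Sum>i\<in>UNIV. x$i * (\<Sum>j\<in>UNIV. scaled_plus_diag l m X $ i $ j * x$j))"
    by (simp add: inner_vec_def matrix_vector_mult_def)
  also have "\<dots> = (\<Sum>i\<in>UNIV. l * (x$i * (\<Sum>j\<in>UNIV. X$i$j * x$j)) + m * X$i$i * (x$i)\<^sup>2)"
    unfolding row by (simp add: algebra_simps power2_eq_square)
  also have "\<dots> = l * (x \<bullet> (X *v x)) + (\<Sum>i\<in>UNIV. m * X$i$i * (x$i)\<^sup>2)"
    by (simp add: sum.distrib sum_distrib_left inner_vec_def matrix_vector_mult_def)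
  finally show ?thesis .
qed

lemma psd_scaled_plus_diag:
  fixes X :: "real^'n::finite^'n"
  assumes "psd X" "\<forall>i. 0 \<le> X $ i $ i" "0 \<le> l" "0 \<le> m"
  shows "psd (scaled_plus_diag l m X)"
  unfolding psd_def
proof (intro conjI allI)
  have "transpose X = X" using assms(1) by (simp add: psd_def)
  then show "transpose (scaled_plus_diag l m X) = scaled_plus_diag l m X"
    by (simp add: transpose_def vec_eq_iff scaled_plus_diag_nth)
  fix x :: "real^'n"
  have "0 \<le> x \<bullet> (X *v x)" using assms(1) by (simp add: psd_def)
  moreover have "0 \<le> (\<Sum>i\<in>UNIV. m * X$i$i * (x$i)\<^sup>2)"
    using assms(2,4) by (intro sum_nonneg) auto
  ultimately show "0 \<le> x \<bullet> (scaled_plus_diag l m X *v x)"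
    unfolding quadratic_form_scaled_plus_diag using assms(3) by simp
qed

lemma Q_feasible_scaled_plus_diag:
  assumes feas: "Q_feasible t X" and "0 \<le> l" "0 \<le> m"
    and trace_eq: "(l + m) * t = t'" and row_eq: "l * t + m = t' * (l + m)"
  shows "Q_feasible t' (scaled_plus_diag l m X)"
proof -
  let ?Y = "scaled_plus_diag l m X"
  from feas have psd: "psd X" and nonneg: "\<forall>i j. 0 \<le> X $ i $ j"
    and tr: "trace X = t" and row: "X *v ones_vec = t *\<^sub>R diag_vec X"
    unfolding Q_feasible_def by auto
  have psdY: "psd ?Y" using psd_scaled_plus_diag[OF psd _ \<open>0 \<le> l\<close> \<open>0 \<le> m\<close>] nonneg by blast
  have "trace ?Y = (l + m) * trace X"
    by (simp add: trace_def scaled_plus_diag_nth algebra_simps sum.distrib sum_distrib_left)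
  with tr trace_eq have trY: "trace ?Y = t'" by simp
  have "(\<Sum>j\<in>UNIV. ?Y$i$j) = t' * ?Y$i$i" for i
  proof -
    have row_i: "(\<Sum>j\<in>UNIV. X$i$j) = t * X$i$i"
      using arg_cong[OF row, of "\<lambda>v. v $ i"]
      by (simp add: matrix_vector_mult_def ones_vec_def diag_vec_def)
    have "(\<Sum>j\<in>UNIV. ?Y$i$j) = l * (\<Sum>j\<in>UNIV. X$i$j) + m * X$i$i"
      by (simp add: scaled_plus_diag_nth sum.distrib sum_distrib_left)
    also have "\<dots> = (l * t + m) * X$i$i" using row_i by (simp add: algebra_simps)
    also have "\<dots> = t' * ?Y$i$i" unfolding row_eq by (simp add: scaled_plus_diag_nth algebra_simps)
    finally show ?thesis .
  qed
  then have rowY: "?Y *v ones_vec = t' *\<^sub>R diag_vec ?Y"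
    by (simp add: vec_eq_iff matrix_vector_mult_def ones_vec_def diag_vec_def)
  show ?thesis
    using psdY trY rowY nonneg \<open>0 \<le> l\<close> \<open>0 \<le> m\<close>
    by (auto simp: Q_feasible_def psd_def scaled_plus_diag_nth)
qed

lemma frob_adj_matrix_scaled_plus_diag:
  assumes "\<forall>i. \<not> E i i"
  shows "frob (adj_matrix E) (scaled_plus_diag l m X) = l * frob (adj_matrix E) X"
proof -
  have entry: "(if E i j then 1 else 0) * scaled_plus_diag l m X $ i $ j
      = l * ((if E i j then 1 else 0) * X$i$j)" for i j
    using assms by (cases "i = j") (auto simp: scaled_plus_diag_nth)
  show ?thesis
    unfolding frob_eq_sum adj_matrix_def by (simp add: entry sum_distrib_left)
qed

definition shrink_coeff :: "real \<Rightarrow> real \<Rightarrow> real" where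
  "shrink_coeff t' t = t' * (t' - 1) / (t * (t - 1))"

lemma shrink_coeff_bounds:
  assumes "1 \<le> t'" "t' < t"
  shows "0 \<le> shrink_coeff t' t" "shrink_coeff t' t < 1"
proof -
  have "t' * (t' - 1) < t * (t - 1)" using assms by (intro mult_strict_mono') auto
  then show "0 \<le> shrink_coeff t' t" "shrink_coeff t' t < 1"
    using assms by (auto simp: shrink_coeff_def field_simps intro!: divide_nonneg_pos)
qed

lemma Q_feasible_shrink:
  assumes "Q_feasible t X" "1 \<le> t'" "t' < t"
  shows "Q_feasible t' (scaled_plus_diag (shrink_coeff t' t) (t' * (t - t') / (t * (t - 1))) X)"
proof (rule Q_feasible_scaled_plus_diag[OF assms(1) shrink_coeff_bounds(1)[OF assms(2,3)]])
  let ?m = "t' * (t - t') / (t * (t - 1))"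
  have "t > 1" using assms by linarith
  then show "0 \<le> ?m" using assms by (intro divide_nonneg_pos) auto
  have "shrink_coeff t' t + ?m = (t' * (t' - 1) + t' * (t - t')) / (t * (t - 1))"
    by (simp add: shrink_coeff_def add_divide_distrib)
  also have "t' * (t' - 1) + t' * (t - t') = (t' / t) * (t * (t - 1))"
    using \<open>t > 1\<close> by (simp add: field_simps)
  finally have coeff_sum: "shrink_coeff t' t + ?m = t' / t" using \<open>t > 1\<close> by simp
  then show "(shrink_coeff t' t + ?m) * t = t'" using \<open>t > 1\<close> by simp
  have "shrink_coeff t' t * t + ?m = (t' * (t' - 1) * t + t' * (t - t')) / (t * (t - 1))"
    by (simp add: shrink_coeff_def add_divide_distrib)
  also have "t' * (t' - 1) * t + t' * (t - t') = (t' * t' / t) * (t * (t - 1))"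
    using \<open>t > 1\<close> by (simp add: field_simps)
  finally show "shrink_coeff t' t * t + ?m = t' * (shrink_coeff t' t + ?m)"
    unfolding coeff_sum using \<open>t > 1\<close> by simp
qed

lemma Q_feasible_all_ones: "Q_feasible (real CARD('n)) (\<chi> i j. 1 :: real^'n::finite^'n)"
proof -
  have "x \<bullet> ((\<chi> i j. 1 :: real^'n^'n) *v x) = (\<Sum>i\<in>UNIV. x$i)\<^sup>2" for x :: "real^'n"
    by (simp add: inner_vec_def matrix_vector_mult_def power2_eq_square sum_distrib_right)
  then show ?thesis
    by (simp add: Q_feasible_def psd_def transpose_def trace_def vec_eq_iff
        matrix_vector_mult_def ones_vec_def diag_vec_def)
qed

lemma Q_feasible_exists:
  assumes "1 \<le> t" "t \<le> real CARD('n::finite)"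
  shows "\<exists>X::real^'n^'n. Q_feasible t X"
proof (cases "t = real CARD('n)")
  case True
  then show ?thesis using Q_feasible_all_ones by blast
next
  case False
  with assms show ?thesis using Q_feasible_shrink[OF Q_feasible_all_ones[where 'n='n], of t] by fastforce
qed

lemma Q_feasible_objective_nonneg: "Q_feasible t X \<Longrightarrow> 0 \<le> frob (adj_matrix E) X / 2"
  by (simp add: Q_feasible_def frob_adj_matrix_nonneg)

lemma S_val_le_objective:
  assumes "Q_feasible t X"
  shows "S_val E t \<le> frob (adj_matrix E) X / 2"
  unfolding S_val_def
proof (rule cInf_lower)
  show "frob (adj_matrix E) X / 2 \<in> {frob (adj_matrix E) X / 2 |X. Q_feasible t X}"
    using assms by blast
  show "bdd_below {frob (adj_matrix E) X / 2 |X. Q_feasible t X}"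
    by (rule bdd_belowI[of _ 0]) (blast dest: Q_feasible_objective_nonneg)
qed

lemma S_val_nonneg:
  assumes "1 \<le> t" "t \<le> real CARD('n::finite)"
  shows "0 \<le> S_val (E :: 'n \<Rightarrow> 'n \<Rightarrow> bool) t"
  unfolding S_val_def
  using Q_feasible_exists[OF assms] Q_feasible_objective_nonneg
  by (intro cInf_greatest) blast+

lemma S_val_le_shrink_coeff_mult:
  fixes E :: "'n::finite \<Rightarrow> 'n \<Rightarrow> bool"
  assumes "simple_graph E" "1 \<le> t'" "t' < t" "t \<le> real CARD('n)"
  shows "S_val E t' \<le> shrink_coeff t' t * S_val E t"
proof -
  let ?l = "shrink_coeff t' t"
  have irrefl: "\<forall>i. \<not> E i i" using assms(1) by (simp add: simple_graph_def)
  have bound: "S_val E t' \<le> ?l * (frob (adj_matrix E) X / 2)" if "Q_feasible t X" for X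
    using S_val_le_objective[where E=E, OF Q_feasible_shrink[OF that assms(2,3)]]
    by (simp add: frob_adj_matrix_scaled_plus_diag[of E, OF irrefl])
  have "1 \<le> t" using assms by linarith
  then obtain X0 :: "real^'n^'n" where X0: "Q_feasible t X0"
    using Q_feasible_exists assms(4) by blast
  consider "?l = 0" | "?l > 0" using shrink_coeff_bounds[OF assms(2,3)] by linarith
  then show ?thesis
  proof cases
    case 1
    then show ?thesis using bound[OF X0] by simp
  next
    case 2
    have "S_val E t' / ?l \<le> S_val E t"
      unfolding S_val_def[of E t]
    proof (rule cInf_greatest)
      show "{frob (adj_matrix E) X / 2 |X. Q_feasible t X} \<noteq> {}" using X0 by blast
      fix v assume "v \<in> {frob (adj_matrix E) X / 2 |X. Q_feasible t X}"
      then obtain X where X: "Q_feasible t X" and v: "v = frob (adj_matrix E) X / 2" by blast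
      have "S_val E t' \<le> ?l * v" unfolding v by (rule bound[OF X])
      then show "S_val E t' / ?l \<le> v" using 2 by (simp add: pos_divide_le_eq mult.commute)
    qed
    then show ?thesis using 2 by (simp add: divide_le_eq mult.commute)
  qed
qed

theorem mainTheorem10:
  fixes E :: "'n::finite \<Rightarrow> 'n \<Rightarrow> bool"
  assumes "simple_graph E"
  shows "(\<forall>t' t. 1 \<le> t' \<and> t' < t \<and> t \<le> real CARD('n) \<longrightarrow> S_val E t' \<le> S_val E t)
       \<and> (\<forall>t' t. 1 \<le> t' \<and> t' < t \<and> t \<le> real CARD('n) \<and> 0 < S_val E t' \<longrightarrow> S_val E t' < S_val E t)"
proof -
  have bounds: "S_val E t' \<le> shrink_coeff t' t * S_val E t" "0 \<le> S_val E t"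
    "0 \<le> shrink_coeff t' t" "shrink_coeff t' t < 1"
    if "1 \<le> t'" "t' < t" "t \<le> real CARD('n)" for t' t
    using S_val_le_shrink_coeff_mult[OF assms that] S_val_nonneg[of t E]
      shrink_coeff_bounds[OF that(1,2)] that by auto
  have "S_val E t' \<le> S_val E t" if "1 \<le> t'" "t' < t" "t \<le> real CARD('n)" for t' t
    using bounds[OF that] by (meson mult_left_le_one_le less_imp_le order_trans)
  moreover have "S_val E t' < S_val E t"
    if "1 \<le> t'" "t' < t" "t \<le> real CARD('n)" "0 < S_val E t'" for t' t
  proof -
    note b = bounds[OF that(1-3)]
    have "0 < S_val E t"
      using b(1,2) that(4) by (cases "S_val E t = 0") auto
    then have "shrink_coeff t' t * S_val E t < S_val E t" using b(4) by simp
    then show ?thesis using b(1) by linarith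
  qed
  ultimately show ?thesis by blast
qed

end
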